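(* Let $\Omega\subset\mathbb{R}^d$ be compact, let $X_1,\ldots,X_n$ be i.i.d. with density $\varphi_P$ and $Y_1,\ldots,Y_n$ i.i.d. with density $\varphi_D$, independent of the $X_i$. Let $\mathcal{C}=\{C^1,\ldots,C^{|\mathcal{C}|}\}$ be a finite partition of $\Omega$ and $A=[\alpha_{ij}]$ a transportation matrix for $\mathcal{C}$. For each $k$, generate a shadow site $X'_k$ independently as follows: let $C^i$ be the cell containing $Y_k$; sample $J_k=j'$ with probability $\alpha_{ij'}/\varphi_D(C^i)$; then sample $X'_k$ from the density $\varphi_P$ conditioned on $X'_k\in C^{J_k}$. Then the shadow sites $X'_1,\ldots,X'_n$ are (i) jointly independent of $X_1,\ldots,X_n$, and (ii) mutually i.i.d. with density $\varphi_P$.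
   Context: For a cell $C$, $\varphi_P(C)=\int_C\varphi_P$, $\varphi_D(C)=\int_C\varphi_D$. A transportation matrix for $\mathcal{C}$ is a matrix $[\alpha_{ij}]$ with $\alpha_{ij}\ge0$, $\sum_j\alpha_{ij}=\varphi_D(C^i)$ for all $i$ and $\sum_i\alpha_{ij}=\varphi_P(C^j)$ for all $j$. *)

theory Defs
  imports "HOL-Probability.Probability"
begin

definition cell_mass :: "('a::euclidean_space \<Rightarrow> real) \<Rightarrow> 'a set \<Rightarrow> real" where
  "cell_mass \<phi> C = set_lebesgue_integral lborel C \<phi>"

definition finite_partition :: "'a::euclidean_space set \<Rightarrow> (nat \<Rightarrow> 'a set) \<Rightarrow> nat \<Rightarrow> bool" where
  "finite_partition \<Omega> C m \<longleftrightarrow>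
     (\<Union>i<m. C i) = \<Omega> \<and>
     (\<forall>i<m. \<forall>j<m. i \<noteq> j \<longrightarrow> C i \<inter> C j = {}) \<and>
     (\<forall>i<m. C i \<in> sets borel)"

text \<open>Transportation matrix: rows indexed by the cell of Y (mass \<open>\<phi>_D\<close>),
  columns by the cell of X (mass \<open>\<phi>_P\<close>).\<close>
definition transportation_matrix ::
  "('a::euclidean_space \<Rightarrow> real) \<Rightarrow> ('a \<Rightarrow> real) \<Rightarrow> (nat \<Rightarrow> 'a set) \<Rightarrow> nat \<Rightarrow> (nat \<Rightarrow> nat \<Rightarrow> real) \<Rightarrow> bool" where
  "transportation_matrix \<phi>P \<phi>D C m \<alpha> \<longleftrightarrow>
     (\<forall>i<m. \<forall>j<m. 0 \<le> \<alpha> i j) \<and>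
     (\<forall>i<m. (\<Sum>j<m. \<alpha> i j) = cell_mass \<phi>D (C i)) \<and>
     (\<forall>j<m. (\<Sum>i<m. \<alpha> i j) = cell_mass \<phi>P (C j))"

end

theory Submission
  imports Defs
begin

text \<open>The shadow site \<open>X'\<^sub>k\<close> is built only from the triple \<open>(Y\<^sub>k, J\<^sub>k, X'\<^sub>k)\<close>, and these
  triples are independent of each other and of the \<open>X\<^sub>i\<close>; independence of the shadow sites
  therefore follows by coarsening the given family of independent \<open>\<sigma>\<close>-algebras.
  For the law of \<open>X'\<^sub>k\<close>, summing the joint law over the row index \<open>i\<close> collapses
  \<open>\<phi>\<^sub>D(C\<^sup>i) \<cdot> \<alpha>\<^sub>i\<^sub>j / \<phi>\<^sub>D(C\<^sup>i)\<close> to the column sum \<open>\<phi>\<^sub>P(C\<^sup>j)\<close>, so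
  \<open>P(X'\<^sub>k \<in> B) = \<Sum>\<^sub>j \<phi>\<^sub>P(B \<inter> C\<^sup>j) = \<phi>\<^sub>P(B)\<close>.\<close>

lemma (in prob_space) indep_vars_if_indep_sets_preimages:
  assumes "indep_sets F I"
    and "\<And>i. i \<in> I \<Longrightarrow> random_variable (N i) (Z i)"
    and "\<And>i A. i \<in> I \<Longrightarrow> A \<in> sets (N i) \<Longrightarrow> Z i -` A \<inter> space M \<in> F i"
  shows "indep_vars N Z I"
  unfolding indep_vars_def2 using assms by (auto intro!: indep_sets_mono_sets[OF assms(1)])

lemma (in prob_space) indep_var_case_sum:
  assumes "indep_vars (\<lambda>_. N) (case_sum X Y) (I <+> K)"
  shows "indep_var (\<Pi>\<^sub>M i\<in>I. N) (\<lambda>\<omega>. \<lambda>i\<in>I. X i \<omega>) (\<Pi>\<^sub>M k\<in>K. N) (\<lambda>\<omega>. \<lambda>k\<in>K. Y k \<omega>)"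
proof -
  let ?Z = "case_sum X Y"
  have "indep_var (\<Pi>\<^sub>M i\<in>Inl ` I. N) (\<lambda>\<omega>. \<lambda>i\<in>Inl ` I. ?Z i \<omega>)
                  (\<Pi>\<^sub>M i\<in>Inr ` K. N) (\<lambda>\<omega>. \<lambda>i\<in>Inr ` K. ?Z i \<omega>)"
    by (rule indep_var_restrict[OF assms]) auto
  then have "indep_var
      (\<Pi>\<^sub>M i\<in>I. N) ((\<lambda>f. \<lambda>i\<in>I. f (Inl i)) \<circ> (\<lambda>\<omega>. \<lambda>i\<in>Inl ` I. ?Z i \<omega>))
      (\<Pi>\<^sub>M k\<in>K. N) ((\<lambda>f. \<lambda>k\<in>K. f (Inr k)) \<circ> (\<lambda>\<omega>. \<lambda>i\<in>Inr ` K. ?Z i \<omega>))"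
    by (rule indep_var_compose) (auto intro!: measurable_restrict measurable_component_singleton)
  moreover have "(\<lambda>f. \<lambda>i\<in>I. f (Inl i)) \<circ> (\<lambda>\<omega>. \<lambda>i\<in>Inl ` I. ?Z i \<omega>) = (\<lambda>\<omega>. \<lambda>i\<in>I. X i \<omega>)"
    "(\<lambda>f. \<lambda>k\<in>K. f (Inr k)) \<circ> (\<lambda>\<omega>. \<lambda>i\<in>Inr ` K. ?Z i \<omega>) = (\<lambda>\<omega>. \<lambda>k\<in>K. Y k \<omega>)"
    by (auto simp: fun_eq_iff restrict_def)
  ultimately show ?thesis by simp
qed

lemma (in prob_space) indep_vars_case_sum_Inr:
  assumes "indep_vars (\<lambda>_. N) (case_sum X Y) (I <+> K)"
  shows "indep_vars (\<lambda>_. N) Y K"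
proof -
  have "indep_vars (\<lambda>k. \<Pi>\<^sub>M i\<in>{Inr k}. N) (\<lambda>k \<omega>. \<lambda>i\<in>{Inr k}. case_sum X Y i \<omega>) K"
    by (rule indep_vars_restrict[OF assms]) (auto simp: disjoint_family_on_def)
  then have "indep_vars (\<lambda>_. N) (\<lambda>k \<omega>. (\<lambda>f. f (Inr k)) (\<lambda>i\<in>{Inr k}. case_sum X Y i \<omega>)) K"
    by (rule indep_vars_compose2) (auto intro!: measurable_component_singleton)
  then show ?thesis by simp
qed

lemma mult_divide_cancel_of_le:
  fixes c d :: real
  assumes "0 \<le> d" "d \<le> c"
  shows "c * (d / c) = d"
  using assms by (cases "c = 0") auto

lemma cell_mass_eq_integral: "cell_mass \<phi> S = (\<integral>x. \<phi> x * indicator S x \<partial>lborel)"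
  unfolding cell_mass_def set_lebesgue_integral_def by (simp add: mult.commute)

lemma cell_mass_nonneg: "(\<And>x. 0 \<le> \<phi> x) \<Longrightarrow> 0 \<le> cell_mass \<phi> S"
  unfolding cell_mass_eq_integral by (intro integral_nonneg_AE) auto

lemma cell_mass_mono:
  assumes "integrable lborel \<phi>" "\<And>x. 0 \<le> \<phi> x" "S \<subseteq> T" "S \<in> sets borel" "T \<in> sets borel"
  shows "cell_mass \<phi> S \<le> cell_mass \<phi> T"
  unfolding cell_mass_eq_integral using assms
  by (intro integral_mono integrable_real_mult_indicator) (auto split: split_indicator)

lemma cell_mass_partition_sum:
  assumes "finite_partition \<Omega> C m" "integrable lborel \<phi>"
    and "\<And>x. x \<notin> \<Omega> \<Longrightarrow> \<phi> x = 0" and "B \<in> sets borel"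
  shows "(\<Sum>j<m. cell_mass \<phi> (B \<inter> C j)) = cell_mass \<phi> B"
proof -
  have part: "(\<Union>i<m. C i) = \<Omega>" "\<And>i j. i < m \<Longrightarrow> j < m \<Longrightarrow> i \<noteq> j \<Longrightarrow> C i \<inter> C j = {}"
    "\<And>i. i < m \<Longrightarrow> C i \<in> sets borel"
    using assms(1) unfolding finite_partition_def by auto
  have pointwise: "(\<Sum>j<m. \<phi> x * indicator (B \<inter> C j) x) = \<phi> x * indicator B x" for x
  proof (cases "x \<in> \<Omega>")
    case False
    then show ?thesis using part(1) assms(3) by (auto simp: indicator_def)
  next
    case True
    then obtain j0 where j0: "j0 < m" "x \<in> C j0" using part(1) by auto
    have "(\<Sum>j<m. \<phi> x * indicator (B \<inter> C j) x) = \<phi> x * indicator (B \<inter> C j0) x"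
      using j0 part(2)
      by (intro sum.remove[THEN trans]) (auto simp: indicator_def intro!: sum.neutral)
    then show ?thesis using j0 by (simp add: indicator_def)
  qed
  have "(\<Sum>j<m. cell_mass \<phi> (B \<inter> C j)) = (\<integral>x. (\<Sum>j<m. \<phi> x * indicator (B \<inter> C j) x) \<partial>lborel)"
    unfolding cell_mass_eq_integral using part(3) assms(2,4)
    by (subst Bochner_Integration.integral_sum) (auto intro!: integrable_real_mult_indicator)
  then show ?thesis by (simp add: pointwise cell_mass_eq_integral)
qed

lemma integrable_density_if_distributed:
  assumes "prob_space M" "distributed M lborel X (\<lambda>x. ennreal (f x))" "\<And>x. 0 \<le> f x"
  shows "integrable lborel f"
proof -
  interpret prob_space M by fact
  have "integrable lborel (\<lambda>x. f x * 1) \<longleftrightarrow> integrable M (\<lambda>\<omega>. (\<lambda>_. 1::real) (X \<omega>))"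
    by (rule distributed_integrable[OF assms(2)]) (auto simp: assms(3))
  then show ?thesis by simp
qed

lemma distributed_lborel_if_measure_eq_cell_mass:
  assumes "prob_space M" "X \<in> borel_measurable M"
    and "f \<in> borel_measurable borel" "\<And>x. 0 \<le> f x" "integrable lborel f"
    and "\<And>B. B \<in> sets borel \<Longrightarrow> measure M (X -` B \<inter> space M) = cell_mass f B"
  shows "distributed M lborel X (\<lambda>x. ennreal (f x))"
proof -
  interpret prob_space M by fact
  have "distr M lborel X = density lborel (\<lambda>x. ennreal (f x))"
  proof (rule measure_eqI)
    fix B assume "B \<in> sets (distr M lborel X)"
    then have B: "B \<in> sets borel" by simp
    have "emeasure (distr M lborel X) B = ennreal (measure M (X -` B \<inter> space M))"
      using B assms(2) by (simp add: emeasure_distr emeasure_eq_measure)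
    also have "\<dots> = ennreal (\<integral>x. f x * indicator B x \<partial>lborel)"
      by (simp add: assms(6)[OF B] cell_mass_eq_integral)
    also have "\<dots> = (\<integral>\<^sup>+x. ennreal (f x * indicator B x) \<partial>lborel)"
      using B assms(4,5)
      by (intro nn_integral_eq_integral[symmetric] integrable_real_mult_indicator) auto
    also have "\<dots> = emeasure (density lborel (\<lambda>x. ennreal (f x))) B"
      using B assms(3) by (auto simp: emeasure_density indicator_def intro!: nn_integral_cong)
    finally show "emeasure (distr M lborel X) B = emeasure (density lborel (\<lambda>x. ennreal (f x))) B" .
  qed simp
  then show ?thesis unfolding distributed_def using assms(2,3) by simp
qed

lemma shadow_site_measure:
  fixes Y X' :: "'b \<Rightarrow> 'a::euclidean_space" and J :: "'b \<Rightarrow> nat"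
  assumes "prob_space M"
    and "finite_partition \<Omega> C m" and "transportation_matrix \<phi>P \<phi>D C m \<alpha>"
    and "integrable lborel \<phi>P" "\<And>x. 0 \<le> \<phi>P x" "\<And>x. x \<notin> \<Omega> \<Longrightarrow> \<phi>P x = 0"
    and "J \<in> measurable M (count_space UNIV)" "X' \<in> borel_measurable M"
    and "\<And>\<omega>. \<omega> \<in> space M \<Longrightarrow> J \<omega> < m"
    and law: "\<And>A B j. A \<in> sets borel \<Longrightarrow> B \<in> sets borel \<Longrightarrow> j < m \<Longrightarrow>
           measure M {\<omega> \<in> space M. Y \<omega> \<in> A \<and> J \<omega> = j \<and> X' \<omega> \<in> B} =
           (\<Sum>i<m. cell_mass \<phi>D (A \<inter> C i) * (\<alpha> i j / cell_mass \<phi>D (C i))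
                     * (cell_mass \<phi>P (B \<inter> C j) / cell_mass \<phi>P (C j)))"
    and B: "B \<in> sets borel"
  shows "measure M (X' -` B \<inter> space M) = cell_mass \<phi>P B"
proof -
  interpret prob_space M by fact
  have cells: "\<And>j. j < m \<Longrightarrow> C j \<in> sets borel"
    using assms(2) unfolding finite_partition_def by auto
  have \<alpha>: "\<And>i j. i < m \<Longrightarrow> j < m \<Longrightarrow> 0 \<le> \<alpha> i j"
    "\<And>i. i < m \<Longrightarrow> (\<Sum>j<m. \<alpha> i j) = cell_mass \<phi>D (C i)"
    "\<And>j. j < m \<Longrightarrow> (\<Sum>i<m. \<alpha> i j) = cell_mass \<phi>P (C j)"
    using assms(3) unfolding transportation_matrix_def by auto
  define E where "E j = {\<omega> \<in> space M. J \<omega> = j \<and> X' \<omega> \<in> B}" for j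
  have E_events: "E j \<in> events" for j
    unfolding E_def using assms(7,8) B by measurable
  have E_measure: "measure M (E j) = cell_mass \<phi>P (B \<inter> C j)" if j: "j < m" for j
  proof -
    \<comment> \<open>Also for empty cells, where \<open>x / 0 = 0\<close>: the row sum then forces \<open>\<alpha> i j = 0\<close>.\<close>
    have row: "cell_mass \<phi>D (C i) * (\<alpha> i j / cell_mass \<phi>D (C i)) = \<alpha> i j" if i: "i < m" for i
      using \<alpha>(1) \<alpha>(2)[OF i, symmetric] i j
      by (intro mult_divide_cancel_of_le) (auto intro!: member_le_sum)
    have "measure M (E j) = (\<Sum>i<m. \<alpha> i j * (cell_mass \<phi>P (B \<inter> C j) / cell_mass \<phi>P (C j)))"
      using law[OF _ B j, of UNIV] row by (simp add: E_def)
    also have "\<dots> = cell_mass \<phi>P (C j) * (cell_mass \<phi>P (B \<inter> C j) / cell_mass \<phi>P (C j))"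
      by (simp only: sum_distrib_right[symmetric] \<alpha>(3)[OF j])
    also have "\<dots> = cell_mass \<phi>P (B \<inter> C j)"
      using assms(4,5) B cells[OF j]
      by (intro mult_divide_cancel_of_le cell_mass_nonneg cell_mass_mono) auto
    finally show ?thesis .
  qed
  have "X' -` B \<inter> space M = (\<Union>j<m. E j)"
    using assms(9) by (auto simp: E_def)
  then have "measure M (X' -` B \<inter> space M) = (\<Sum>j<m. measure M (E j))"
    using E_events by (auto intro!: finite_measure_finite_Union simp: disjoint_family_on_def E_def)
  also have "\<dots> = (\<Sum>j<m. cell_mass \<phi>P (B \<inter> C j))"
    by (simp add: E_measure)
  also have "\<dots> = cell_mass \<phi>P B"
    using assms(2,4,6) B by (rule cell_mass_partition_sum)
  finally show ?thesis .
qed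

theorem lemma6:
  fixes M :: "'b measure"
    and \<Omega> :: "'a::euclidean_space set"
    and \<phi>P \<phi>D :: "'a \<Rightarrow> real"
    and C :: "nat \<Rightarrow> 'a set" and m :: nat
    and \<alpha> :: "nat \<Rightarrow> nat \<Rightarrow> real"
    and n :: nat
    and X Y X' :: "nat \<Rightarrow> 'b \<Rightarrow> 'a"
    and J :: "nat \<Rightarrow> 'b \<Rightarrow> nat"
  assumes "prob_space M"
    and "compact \<Omega>"
    and "\<phi>P \<in> borel_measurable borel" "\<phi>D \<in> borel_measurable borel"
    and "\<And>x. 0 \<le> \<phi>P x" "\<And>x. 0 \<le> \<phi>D x"
    and "\<And>x. x \<notin> \<Omega> \<Longrightarrow> \<phi>P x = 0" "\<And>x. x \<notin> \<Omega> \<Longrightarrow> \<phi>D x = 0"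
    and "finite_partition \<Omega> C m"
    and "transportation_matrix \<phi>P \<phi>D C m \<alpha>"
    and "\<And>k. k < n \<Longrightarrow> distributed M lborel (X k) (\<lambda>x. ennreal (\<phi>P x))"
    and "prob_space.indep_vars M (\<lambda>_. borel) X {..<n}"
    and "\<And>k. k < n \<Longrightarrow> distributed M lborel (Y k) (\<lambda>x. ennreal (\<phi>D x))"
    \<comment> \<open>the shadow-site mechanism: joint law of (Y_k, J_k, X'_k)\<close>
    and "\<And>k. k < n \<Longrightarrow> J k \<in> measurable M (count_space UNIV)"
    and "\<And>k. k < n \<Longrightarrow> X' k \<in> borel_measurable M"
    and "\<And>k \<omega>. k < n \<Longrightarrow> \<omega> \<in> space M \<Longrightarrow> J k \<omega> < m"
    and "\<And>k A B j. k < n \<Longrightarrow> A \<in> sets borel \<Longrightarrow> B \<in> sets borel \<Longrightarrow> j < m \<Longrightarrow>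
           measure M {\<omega> \<in> space M. Y k \<omega> \<in> A \<and> J k \<omega> = j \<and> X' k \<omega> \<in> B} =
           (\<Sum>i<m. cell_mass \<phi>D (A \<inter> C i) * (\<alpha> i j / cell_mass \<phi>D (C i))
                     * (cell_mass \<phi>P (B \<inter> C j) / cell_mass \<phi>P (C j)))"
    \<comment> \<open>the X_k and the triples (Y_k, J_k, X'_k), k < n, are all mutually independent
        (shadow sites generated independently; Y's independent of X's)\<close>
    and "prob_space.indep_sets M
           (case_sum (\<lambda>k. {X k -` A \<inter> space M | A. A \<in> sets borel})
                     (\<lambda>k. {(\<lambda>\<omega>. (Y k \<omega>, J k \<omega>, X' k \<omega>)) -` A \<inter> space M | A.
                              A \<in> sets (borel \<Otimes>\<^sub>M count_space UNIV \<Otimes>\<^sub>M borel)}))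
           ({..<n} <+> {..<n})"
  shows "prob_space.indep_var M
           (\<Pi>\<^sub>M k\<in>{..<n}. borel) (\<lambda>\<omega>. \<lambda>k\<in>{..<n}. X k \<omega>)
           (\<Pi>\<^sub>M k\<in>{..<n}. borel) (\<lambda>\<omega>. \<lambda>k\<in>{..<n}. X' k \<omega>)
       \<and> prob_space.indep_vars M (\<lambda>_. borel) X' {..<n}
       \<and> (\<forall>k<n. distributed M lborel (X' k) (\<lambda>x. ennreal (\<phi>P x)))"
proof -
  interpret prob_space M by fact
  have shadow_preimage: "X' k -` A \<inter> space M =
      (\<lambda>\<omega>. (Y k \<omega>, J k \<omega>, X' k \<omega>)) -` (UNIV \<times> UNIV \<times> A) \<inter> space M" for k A
    by auto
  have UNIV_times: "UNIV \<times> UNIV \<times> A \<in> sets (borel \<Otimes>\<^sub>M count_space UNIV \<Otimes>\<^sub>M borel)"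
    if "A \<in> sets borel" for A :: "'a set"
    using that by (metis pair_measureI sets_UNIV space_borel space_count_space sets.top)
  have "indep_vars (\<lambda>_. borel) (case_sum X X') ({..<n} <+> {..<n})"
  proof (rule indep_vars_if_indep_sets_preimages[OF assms(18)])
    show "random_variable borel (case_sum X X' i)" if "i \<in> {..<n} <+> {..<n}" for i
      using that assms(11,15) by (auto simp: distributed_def)
    show "case_sum X X' i -` A \<inter> space M \<in> case_sum
        (\<lambda>k. {X k -` A \<inter> space M | A. A \<in> sets borel})
        (\<lambda>k. {(\<lambda>\<omega>. (Y k \<omega>, J k \<omega>, X' k \<omega>)) -` A \<inter> space M | A.
                 A \<in> sets (borel \<Otimes>\<^sub>M count_space UNIV \<Otimes>\<^sub>M borel)}) i"
      if "A \<in> sets borel" for i A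
    proof (cases i)
      case (Inr k)
      then show ?thesis
        using UNIV_times[OF that] by (simp only: sum.case shadow_preimage) blast
    qed (use that in auto)
  qed
  moreover have "distributed M lborel (X' k) (\<lambda>x. ennreal (\<phi>P x))" if k: "k < n" for k
  proof -
    have "integrable lborel \<phi>P"
      using assms(1) assms(11)[OF k] assms(5) by (rule integrable_density_if_distributed)
    with assms(1,3,5) assms(15)[OF k] show ?thesis
      by (intro distributed_lborel_if_measure_eq_cell_mass shadow_site_measure[where J = "J k"])
         (use assms(7,9,10) assms(14-17)[OF k] in auto)
  qed
  ultimately show ?thesis
    by (auto intro: indep_var_case_sum indep_vars_case_sum_Inr)
qed

end
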